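(* For any finite $m$, a solitary wave (travelling wave, soliton-like) solution $u=u(\xi)$, $\xi=x+\mu t$, of the equation \[ \tau u_{tt}+uu_x+u_t-\kappa u_{xx}+\gamma u (u^2-z_0^2)=0 \] cannot be written in the form \[ u(\xi)=\frac{\sum_{k=1}^{m}a_k \exp{[k\alpha\xi]}}{1+\sum_{r=1}^{m+1}b_r \exp{[r\alpha\xi]}}, \] with constant coefficients $a_k$, $b_r$ and constant $\alpha$.
   Context: Here $\tau,\kappa,\gamma,z_0$ are constants (the generalized Burgers equation). Substituting $u=U(x+\mu t)$ gives the ODE $h U''+U'(\mu+U)+\gamma U(U^2-z_0^2)=0$ with $h=\tau\mu^2-\kappa$; the scaling $\bar U=U/z_0$, $T=\sqrt{\gamma z_0^2/h}\,\xi$ yields $\bar U''+A\bar U'(\bar\mu+\bar U)+\bar U(\bar U^2-1)=0$ with $A=1/\sqrt{h\gamma^2}$, $\bar\mu=\mu/z_0$. A solitary wave corresponds to a homoclinic trajectory bi-asymptotic to the origin of the associated planar system; the proposed representation has the proper asymptotics as $\xi\to\pm\infty$. *)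

theory Defs
  imports "HOL-Analysis.Analysis"
begin

definition gen_burgers_pde ::
  "real \<Rightarrow> real \<Rightarrow> real \<Rightarrow> real \<Rightarrow> (real \<Rightarrow> real \<Rightarrow> real) \<Rightarrow> bool" where
  "gen_burgers_pde \<tau> \<kappa> \<gamma> z0 u \<longleftrightarrow>
     (\<forall>x t.
        \<tau> * deriv (\<lambda>s. deriv (\<lambda>r. u x r) s) t
      + u x t * deriv (\<lambda>y. u y t) x
      + deriv (\<lambda>s. u x s) t
      - \<kappa> * deriv (\<lambda>y. deriv (\<lambda>z. u z t) y) x
      + \<gamma> * u x t * ((u x t)\<^sup>2 - z0\<^sup>2) = 0)"

definition travelling_wave_solution ::
  "real \<Rightarrow> real \<Rightarrow> real \<Rightarrow> real \<Rightarrow> real \<Rightarrow> (real \<Rightarrow> real) \<Rightarrow> bool" where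
  "travelling_wave_solution \<tau> \<kappa> \<gamma> z0 \<mu> U \<longleftrightarrow>
     (\<forall>\<xi>. U differentiable (at \<xi>)) \<and>
     (\<forall>\<xi>. (deriv U) differentiable (at \<xi>)) \<and>
     gen_burgers_pde \<tau> \<kappa> \<gamma> z0 (\<lambda>x t. U (x + \<mu> * t))"

definition solitary_wave ::
  "real \<Rightarrow> real \<Rightarrow> real \<Rightarrow> real \<Rightarrow> real \<Rightarrow> (real \<Rightarrow> real) \<Rightarrow> bool" where
  "solitary_wave \<tau> \<kappa> \<gamma> z0 \<mu> U \<longleftrightarrow>
     travelling_wave_solution \<tau> \<kappa> \<gamma> z0 \<mu> U \<and>
     (U \<longlongrightarrow> 0) at_top \<and> (U \<longlongrightarrow> 0) at_bot \<and>
     (deriv U \<longlongrightarrow> 0) at_top \<and> (deriv U \<longlongrightarrow> 0) at_bot \<and>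
     (\<exists>\<xi>. U \<xi> \<noteq> 0)"

definition rational_exp_form :: "nat \<Rightarrow> (real \<Rightarrow> real) \<Rightarrow> bool" where
  "rational_exp_form m U \<longleftrightarrow>
     (\<exists>(a::nat \<Rightarrow> real) (b::nat \<Rightarrow> real) (\<alpha>::real). \<forall>\<xi>.
        1 + (\<Sum>r=1..m+1. b r * exp (real r * \<alpha> * \<xi>)) \<noteq> 0 \<and>
        U \<xi> = (\<Sum>k=1..m. a k * exp (real k * \<alpha> * \<xi>)) /
               (1 + (\<Sum>r=1..m+1. b r * exp (real r * \<alpha> * \<xi>))))"

end

theory Submission
  imports Defs "HOL-Computational_Algebra.Computational_Algebra" "HOL-Computational_Algebra.Field_as_Ring"
begin

(*
  Put y = exp (alpha xi).  A profile of the given form is U = P(y) / Q(y) with coprime real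
  polynomials and P(0) = 0, and decay at both ends forces deg P < deg Q.  Substituting into the
  travelling wave ODE h U'' + (mu + U) U' + gamma U (U^2 - z0^2) = 0 and clearing Q^3 gives a
  polynomial identity in y.  At a complex zero z of Q only the cubic pole terms survive: the zero
  is simple and rho = P(z) / (alpha z Q'(z)) satisfies gamma rho^2 - rho + 2 h = 0, so Re rho > 0
  as gamma, h > 0.  But the sum of these rho over all zeros of Q is a divided difference of the
  polynomial P(y) / y, of degree at most deg Q - 2, hence vanishes.
*)

lemma quadratic_root_Re_pos:
  fixes \<rho> :: complex and a c :: real
  assumes "a > 0" "c > 0" and root: "of_real a * \<rho>\<^sup>2 - \<rho> + of_real c = 0"
  shows "Re \<rho> > 0"
proof -
  have "\<rho> \<noteq> 0"
    using root \<open>c > 0\<close> by auto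
  with root have "Re (of_real a * \<rho> + of_real c / \<rho>) = 1"
    by (simp add: field_simps power2_eq_square)
  then have "Re \<rho> * (a + c / ((Re \<rho>)\<^sup>2 + (Im \<rho>)\<^sup>2)) = 1"
    by (simp add: Re_divide power2_eq_square algebra_simps)
  moreover have "a + c / ((Re \<rho>)\<^sup>2 + (Im \<rho>)\<^sup>2) > 0"
    using assms by (simp add: add_pos_nonneg)
  ultimately show ?thesis
    by (metis zero_less_mult_pos2 zero_less_one)
qed

definition divided_difference :: "'a::field set \<Rightarrow> ('a \<Rightarrow> 'a) \<Rightarrow> 'a" where
  "divided_difference S f = (\<Sum>z\<in>S. f z / (\<Prod>w\<in>S - {z}. z - w))"

lemma lagrange_interpolation:
  fixes F :: "'a::field poly"
  assumes "finite S" "degree F < card S"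
  shows "F = (\<Sum>z\<in>S. smult (poly F z / (\<Prod>w\<in>S - {z}. z - w)) (\<Prod>w\<in>S - {z}. [:-w, 1:]))"
    (is "F = ?L")
proof (rule poly_eqI_degree)
  fix v assume "v \<in> S"
  have "poly ?L v = (\<Sum>z\<in>S. poly F z / (\<Prod>w\<in>S - {z}. z - w) * (\<Prod>w\<in>S - {z}. v - w))"
    by (simp add: poly_sum poly_prod)
  also have "\<dots> = (\<Sum>z\<in>{v}. poly F z / (\<Prod>w\<in>S - {z}. z - w) * (\<Prod>w\<in>S - {z}. v - w))"
    using \<open>finite S\<close> \<open>v \<in> S\<close> by (intro sum.mono_neutral_right) (auto intro: prod_zero)
  also have "\<dots> = poly F v"
    using \<open>finite S\<close> by simp
  finally show "poly F v = poly ?L v" ..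
next
  have "degree (\<Prod>w\<in>S - {z}. [:-w, 1::'a:]) < card S" if "z \<in> S" for z
    using \<open>finite S\<close> that card_gt_0_iff[of S] by (auto simp: degree_prod_sum_eq)
  then show "degree ?L < card S"
    using \<open>finite S\<close> assms by (intro degree_sum_less) (auto intro: le_less_trans[OF degree_smult_le])
qed (use assms in auto)

lemma divided_difference_poly:
  fixes F :: "'a::field poly"
  assumes "finite S" "degree F < card S"
  shows "divided_difference S (poly F) = coeff F (card S - 1)"
proof -
  have "coeff (\<Prod>w\<in>S - {z}. [:-w, 1::'a:]) (card S - 1) = 1" if "z \<in> S" for z
    using \<open>finite S\<close> that lead_coeff_prod[of "\<lambda>w. [:-w, 1:]" "S - {z}"]
    by (simp add: degree_prod_sum_eq)
  then have "coeff F (card S - 1) = divided_difference S (poly F)"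
    by (subst lagrange_interpolation[OF assms]) (simp add: divided_difference_def coeff_sum)
  then show ?thesis ..
qed

lemma
  fixes B :: "complex poly"
  assumes "rsquarefree B"
  shows degree_rsquarefree_eq_card_roots: "degree B = card {z. poly B z = 0}"
    and poly_pderiv_rsquarefree_root: "poly B z = 0 \<Longrightarrow>
      poly (pderiv B) z = lead_coeff B * (\<Prod>w\<in>{w. poly B w = 0} - {z}. z - w)"
proof -
  define S where "S = {z. poly B z = 0}"
  have "B \<noteq> 0"
    using assms by (simp add: rsquarefree_def)
  then have "finite S"
    unfolding S_def by (rule poly_roots_finite)
  have B: "B = smult (lead_coeff B) (\<Prod>w\<in>S. [:-w, 1:])"
    unfolding S_def using complex_poly_decompose_rsquarefree[OF assms] by simp
  show "degree B = card S"
    using \<open>finite S\<close> \<open>B \<noteq> 0\<close> by (subst B) (simp add: degree_prod_sum_eq)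
  assume "poly B z = 0"
  then have "B = smult (lead_coeff B) ([:-z, 1:] * (\<Prod>w\<in>S - {z}. [:-w, 1:]))"
    using B \<open>finite S\<close> by (simp add: S_def prod.remove)
  then have "poly (pderiv B) z
      = poly (pderiv (smult (lead_coeff B) ([:-z, 1:] * (\<Prod>w\<in>S - {z}. [:-w, 1:])))) z"
    by (rule arg_cong)
  also have "\<dots> = lead_coeff B * (\<Prod>w\<in>S - {z}. z - w)"
    by (simp only: pderiv_smult pderiv_mult) (simp add: pderiv_pCons poly_prod)
  finally show "poly (pderiv B) z = lead_coeff B * (\<Prod>w\<in>S - {z}. z - w)" .
qed

lemma pole_balance_impossible:
  fixes A B :: "complex poly" and \<alpha> \<gamma> h :: real
  assumes no_common_root: "\<And>z. poly B z = 0 \<Longrightarrow> poly A z \<noteq> 0"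
    and "poly A 0 = 0" and "degree A < degree B" and "\<alpha> \<noteq> 0" and "\<gamma> > 0" and "h > 0"
    and balance: "\<And>z. poly B z = 0 \<Longrightarrow> poly A z * (of_real \<gamma> * (poly A z)\<^sup>2
        - of_real \<alpha> * z * poly A z * poly (pderiv B) z
        + of_real (2 * h * \<alpha>\<^sup>2) * z\<^sup>2 * (poly (pderiv B) z)\<^sup>2) = 0"
  shows False
proof -
  define S where "S = {z. poly B z = 0}"
  have quadratic: "of_real \<gamma> * (poly A z)\<^sup>2 - of_real \<alpha> * z * poly A z * poly (pderiv B) z
      + of_real (2 * h * \<alpha>\<^sup>2) * z\<^sup>2 * (poly (pderiv B) z)\<^sup>2 = 0" if "z \<in> S" for z
    using balance no_common_root that by (simp add: S_def)
  have nonzero: "z \<noteq> 0" "poly (pderiv B) z \<noteq> 0" if "z \<in> S" for z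
    using no_common_root \<open>poly A 0 = 0\<close> quadratic[OF that] that \<open>\<gamma> > 0\<close> by (auto simp: S_def)
  then have "rsquarefree B"
    by (auto simp: rsquarefree_roots S_def)
  then have "B \<noteq> 0" and card: "card S = degree B"
    by (auto simp: rsquarefree_def S_def degree_rsquarefree_eq_card_roots)
  then have "finite S" "S \<noteq> {}"
    using \<open>degree A < degree B\<close> card_gt_0_iff[of S] by auto
  obtain A1 where A1: "A = pCons 0 A1"
    using \<open>poly A 0 = 0\<close> by (cases A) auto
  have "A \<noteq> 0"
    using no_common_root \<open>S \<noteq> {}\<close> by (auto simp: S_def)
  then have "degree A1 < card S - 1"
    using \<open>degree A < degree B\<close> card A1 by auto
  then have "divided_difference S (poly A1) = 0"
    using \<open>finite S\<close> by (simp add: divided_difference_poly coeff_eq_0)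
  define \<rho> where "\<rho> z = poly A1 z / (of_real \<alpha> * poly (pderiv B) z)" for z
  have "(\<Sum>z\<in>S. \<rho> z) = (\<Sum>z\<in>S. poly A1 z / (\<Prod>w\<in>S - {z}. z - w) / (of_real \<alpha> * lead_coeff B))"
    using poly_pderiv_rsquarefree_root[OF \<open>rsquarefree B\<close>]
    by (intro sum.cong refl) (simp add: \<rho>_def S_def mult_ac)
  also have "\<dots> = divided_difference S (poly A1) / (of_real \<alpha> * lead_coeff B)"
    by (simp add: divided_difference_def sum_divide_distrib)
  also have "\<dots> = 0"
    using \<open>divided_difference S (poly A1) = 0\<close> by simp
  finally have "(\<Sum>z\<in>S. \<rho> z) = 0" .
  moreover have "Re (\<rho> z) > 0" if "z \<in> S" for z
  proof (rule quadratic_root_Re_pos[OF \<open>\<gamma> > 0\<close>, of "2 * h"])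
    have "poly A z = of_real \<alpha> * z * poly (pderiv B) z * \<rho> z"
      using nonzero[OF that] \<open>\<alpha> \<noteq> 0\<close> by (simp add: A1 \<rho>_def)
    then have "(of_real \<alpha> * z * poly (pderiv B) z)\<^sup>2 * (of_real \<gamma> * (\<rho> z)\<^sup>2 - \<rho> z + of_real (2 * h)) = 0"
      using quadratic[OF that] by (simp add: algebra_simps power2_eq_square)
    then show "of_real \<gamma> * (\<rho> z)\<^sup>2 - \<rho> z + of_real (2 * h) = 0"
      using nonzero[OF that] \<open>\<alpha> \<noteq> 0\<close> by simp
  qed (use \<open>h > 0\<close> in simp)
  then have "Re (\<Sum>z\<in>S. \<rho> z) > 0"
    using \<open>finite S\<close> \<open>S \<noteq> {}\<close> by (simp add: Re_sum sum_pos)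
  ultimately show False
    by simp
qed

lemma
  fixes p q :: "real poly"
  shows map_poly_of_real_add:
      "map_poly of_real (p + q) =
         (map_poly of_real p + map_poly of_real q :: 'a::{idom,real_algebra_1} poly)"
    and map_poly_of_real_diff:
      "map_poly of_real (p - q) = (map_poly of_real p - map_poly of_real q :: 'a poly)"
    and map_poly_of_real_mult:
      "map_poly of_real (p * q) = (map_poly of_real p * map_poly of_real q :: 'a poly)"
    and map_poly_of_real_smult:
      "map_poly of_real (smult c p) = (smult (of_real c) (map_poly of_real p) :: 'a poly)"
    and map_poly_of_real_pderiv:
      "map_poly of_real (pderiv p) = (pderiv (map_poly of_real p) :: 'a poly)"
  by (auto intro!: poly_eqI simp: coeff_map_poly coeff_mult coeff_pderiv)

lemma coprime_imp_no_common_root_of_real: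
  fixes P Q :: "real poly" and z :: "'a::{idom,real_algebra_1}"
  assumes "coprime P Q" and "poly (map_poly of_real Q) z = 0"
  shows "poly (map_poly of_real P) z \<noteq> 0"
proof
  assume "poly (map_poly of_real P) z = 0"
  obtain s t where "s * P + t * Q = 1"
    using bezout_coefficients_fst_snd[of P Q] \<open>coprime P Q\<close> by (metis coprime_imp_gcd_eq_1)
  then have "poly (map_poly of_real (s * P + t * Q)) z = 1"
    by simp
  with assms(2) \<open>poly (map_poly of_real P) z = 0\<close> show False
    by (simp add: map_poly_of_real_add map_poly_of_real_mult)
qed

text \<open>(y d/dy) (N / Q^n) = euler_numerator n N Q / Q^(n+1).\<close>

definition euler_numerator :: "nat \<Rightarrow> 'a::idom poly \<Rightarrow> 'a poly \<Rightarrow> 'a poly" where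
  "euler_numerator n N Q = pCons 0 (pderiv N * Q - smult (of_nat n) (N * pderiv Q))"

lemma poly_euler_numerator_root:
  "poly Q z = 0 \<Longrightarrow> poly (euler_numerator n N Q) z = - (of_nat n * z * poly N z * poly (pderiv Q) z)"
  by (simp add: euler_numerator_def algebra_simps)

lemma map_poly_of_real_euler_numerator:
  "map_poly of_real (euler_numerator n N Q) =
     (euler_numerator n (map_poly of_real N) (map_poly of_real Q) :: 'a::{idom,real_algebra_1} poly)"
  by (simp add: euler_numerator_def map_poly_pCons map_poly_of_real_diff map_poly_of_real_mult
      map_poly_of_real_smult map_poly_of_real_pderiv)

text \<open>Q^3 times h U'' + (mu + U) U' + gamma U (U^2 - z0^2) for U = P(y) / Q(y), y = exp (alpha xi),
  using d/dxi = alpha y d/dy.\<close>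

definition travelling_wave_poly ::
  "real \<Rightarrow> real \<Rightarrow> real \<Rightarrow> real \<Rightarrow> real \<Rightarrow>
     'a::{idom,real_algebra_1} poly \<Rightarrow> 'a poly \<Rightarrow> 'a poly" where
  "travelling_wave_poly h \<mu> \<gamma> z0 \<alpha> P Q =
     (let N = euler_numerator 1 P Q
      in smult (of_real (h * \<alpha>\<^sup>2)) (euler_numerator 2 N Q)
         + smult (of_real \<alpha>) ((smult (of_real \<mu>) Q + P) * N)
         + smult (of_real \<gamma>) (P * (P\<^sup>2 - smult (of_real (z0\<^sup>2)) (Q\<^sup>2))))"

lemma map_poly_of_real_travelling_wave_poly:
  "map_poly of_real (travelling_wave_poly h \<mu> \<gamma> z0 \<alpha> P Q) =
     (travelling_wave_poly h \<mu> \<gamma> z0 \<alpha> (map_poly of_real P) (map_poly of_real Q)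
       :: 'a::{idom,real_algebra_1} poly)"
  by (simp add: travelling_wave_poly_def Let_def power2_eq_square map_poly_of_real_add
      map_poly_of_real_diff map_poly_of_real_mult map_poly_of_real_smult map_poly_of_real_euler_numerator)

lemma poly_travelling_wave_poly_root:
  assumes "poly Q z = 0"
  shows "poly (travelling_wave_poly h \<mu> \<gamma> z0 \<alpha> P Q) z =
    poly P z * (of_real \<gamma> * (poly P z)\<^sup>2 - of_real \<alpha> * z * poly P z * poly (pderiv Q) z
                + of_real (2 * h * \<alpha>\<^sup>2) * z\<^sup>2 * (poly (pderiv Q) z)\<^sup>2)"
proof -
  define N where "N = euler_numerator 1 P Q"
  have N: "poly N z = - (z * poly P z * poly (pderiv Q) z)"
    unfolding N_def using poly_euler_numerator_root[OF assms, of 1] by simp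
  have "poly (euler_numerator 2 N Q) z = - (2 * z * poly N z * poly (pderiv Q) z)"
    using poly_euler_numerator_root[OF assms, of 2] by simp
  with N assms show ?thesis
    unfolding travelling_wave_poly_def Let_def N_def[symmetric]
    by (simp add: of_real_mult of_real_power) (simp add: algebra_simps power2_eq_square)
qed

lemma has_real_derivative_exp_quotient:
  fixes N Q :: "real poly"
  assumes "poly Q (exp (\<alpha> * \<xi>)) \<noteq> 0"
  shows "((\<lambda>\<xi>. poly N (exp (\<alpha> * \<xi>)) / poly Q (exp (\<alpha> * \<xi>)) ^ n) has_real_derivative
           \<alpha> * poly (euler_numerator n N Q) (exp (\<alpha> * \<xi>)) / poly Q (exp (\<alpha> * \<xi>)) ^ Suc n) (at \<xi>)"
proof -
  have exp: "((\<lambda>\<xi>. exp (\<alpha> * \<xi>)) has_real_derivative exp (\<alpha> * \<xi>) * \<alpha>) (at \<xi>)"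
    by (auto intro!: derivative_eq_intros)
  note poly = DERIV_chain2[OF poly_DERIV exp]
  have quotient_rule:
    "(poly (pderiv N) y * (y * \<alpha>) * poly Q y ^ n
        - poly N y * (of_nat n * (poly (pderiv Q) y * (y * \<alpha>) * poly Q y ^ (n - Suc 0))))
       / (poly Q y ^ n * poly Q y ^ n)
     = \<alpha> * poly (euler_numerator n N Q) y / poly Q y ^ Suc n" if "poly Q y \<noteq> 0" for y
    using that by (cases n) (simp_all add: euler_numerator_def field_simps)
  show ?thesis
    using assms
    by (intro DERIV_cong[OF DERIV_divide[OF poly DERIV_power[OF poly]] quotient_rule[OF assms]]) simp
qed

lemma travelling_wave_ode:
  assumes U1: "\<And>\<xi>. (U has_real_derivative U1 \<xi>) (at \<xi>)"
    and U2: "\<And>\<xi>. (U1 has_real_derivative U2 \<xi>) (at \<xi>)"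
    and "gen_burgers_pde \<tau> \<kappa> \<gamma> z0 (\<lambda>x t. U (x + \<mu> * t))"
  shows "(\<tau> * \<mu>\<^sup>2 - \<kappa>) * U2 \<xi> + (\<mu> + U \<xi>) * U1 \<xi> + \<gamma> * U \<xi> * ((U \<xi>)\<^sup>2 - z0\<^sup>2) = 0"
proof -
  have time: "((\<lambda>t. x + \<mu> * t) has_real_derivative \<mu>) (at t)"
    and space: "((\<lambda>x. x + \<mu> * t) has_real_derivative 1) (at x)" for x t
    by (auto intro!: derivative_eq_intros)
  have time_derivs: "deriv (\<lambda>t. U (x + \<mu> * t)) t = U1 (x + \<mu> * t) * \<mu>"
      "deriv (\<lambda>t. U1 (x + \<mu> * t) * \<mu>) t = U2 (x + \<mu> * t) * \<mu> * \<mu>" for x t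
    by (auto intro!: DERIV_imp_deriv DERIV_cmult_right
        DERIV_chain2[OF U1 time] DERIV_chain2[OF U2 time])
  have space_derivs: "deriv (\<lambda>x. U (x + \<mu> * t)) x = U1 (x + \<mu> * t)"
      "deriv (\<lambda>x. U1 (x + \<mu> * t)) x = U2 (x + \<mu> * t)" for x t
    using DERIV_chain2[OF U1 space] DERIV_chain2[OF U2 space] by (auto intro!: DERIV_imp_deriv)
  have "\<tau> * deriv (\<lambda>s. deriv (\<lambda>r. U (\<xi> + \<mu> * r)) s) 0
      + U (\<xi> + \<mu> * 0) * deriv (\<lambda>y. U (y + \<mu> * 0)) \<xi>
      + deriv (\<lambda>s. U (\<xi> + \<mu> * s)) 0
      - \<kappa> * deriv (\<lambda>y. deriv (\<lambda>z. U (z + \<mu> * 0)) y) \<xi>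
      + \<gamma> * U (\<xi> + \<mu> * 0) * ((U (\<xi> + \<mu> * 0))\<^sup>2 - z0\<^sup>2) = 0"
    using assms(3) unfolding gen_burgers_pde_def by blast
  then show ?thesis
    unfolding time_derivs space_derivs by (simp add: power2_eq_square algebra_simps)
qed

lemma travelling_wave_poly_eq_0:
  fixes P Q :: "real poly"
  assumes "\<alpha> \<noteq> 0" and Q: "\<And>\<xi>. poly Q (exp (\<alpha> * \<xi>)) \<noteq> 0"
    and pde: "gen_burgers_pde \<tau> \<kappa> \<gamma> z0 (\<lambda>x t. U (x + \<mu> * t))"
    and U: "U = (\<lambda>\<xi>. poly P (exp (\<alpha> * \<xi>)) / poly Q (exp (\<alpha> * \<xi>)))"
  shows "travelling_wave_poly (\<tau> * \<mu>\<^sup>2 - \<kappa>) \<mu> \<gamma> z0 \<alpha> P Q = 0"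
proof -
  define N where "N = euler_numerator 1 P Q"
  define U1 where "U1 \<xi> = \<alpha> * (poly N (exp (\<alpha> * \<xi>)) / poly Q (exp (\<alpha> * \<xi>)) ^ 2)" for \<xi>
  define U2 where
    "U2 \<xi> = \<alpha> * (\<alpha> * poly (euler_numerator 2 N Q) (exp (\<alpha> * \<xi>)) / poly Q (exp (\<alpha> * \<xi>)) ^ 3)"
    for \<xi>
  have "(U has_real_derivative U1 \<xi>) (at \<xi>)" for \<xi>
    using has_real_derivative_exp_quotient[OF Q, of P 1]
    unfolding U U1_def N_def by (simp add: power2_eq_square)
  moreover have "(U1 has_real_derivative U2 \<xi>) (at \<xi>)" for \<xi>
    using DERIV_cmult[OF has_real_derivative_exp_quotient[OF Q, of N 2], of \<alpha>]
    unfolding U1_def U2_def by simp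
  ultimately have ode:
    "(\<tau> * \<mu>\<^sup>2 - \<kappa>) * U2 \<xi> + (\<mu> + U \<xi>) * U1 \<xi> + \<gamma> * U \<xi> * ((U \<xi>)\<^sup>2 - z0\<^sup>2) = 0" for \<xi>
    using travelling_wave_ode pde by blast
  have "poly (travelling_wave_poly (\<tau> * \<mu>\<^sup>2 - \<kappa>) \<mu> \<gamma> z0 \<alpha> P Q) y = 0" if "y > 0" for y
  proof -
    define \<xi> where "\<xi> = ln y / \<alpha>"
    have y: "exp (\<alpha> * \<xi>) = y"
      using \<open>\<alpha> \<noteq> 0\<close> \<open>y > 0\<close> by (simp add: \<xi>_def)
    have u: "poly P y = U \<xi> * poly Q y" "\<alpha> * poly N y = U1 \<xi> * poly Q y ^ 2"
        "\<alpha>\<^sup>2 * poly (euler_numerator 2 N Q) y = U2 \<xi> * poly Q y ^ 3"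
      using Q[of \<xi>] unfolding U U1_def U2_def y by (simp_all add: power2_eq_square)
    have "poly (travelling_wave_poly (\<tau> * \<mu>\<^sup>2 - \<kappa>) \<mu> \<gamma> z0 \<alpha> P Q) y
        = (\<tau> * \<mu>\<^sup>2 - \<kappa>) * (\<alpha>\<^sup>2 * poly (euler_numerator 2 N Q) y)
          + (\<mu> * poly Q y + poly P y) * (\<alpha> * poly N y)
          + \<gamma> * poly P y * ((poly P y)\<^sup>2 - z0\<^sup>2 * (poly Q y)\<^sup>2)"
      by (simp add: travelling_wave_poly_def Let_def N_def mult_ac)
    also have "\<dots> = poly Q y ^ 3 *
        ((\<tau> * \<mu>\<^sup>2 - \<kappa>) * U2 \<xi> + (\<mu> + U \<xi>) * U1 \<xi> + \<gamma> * U \<xi> * ((U \<xi>)\<^sup>2 - z0\<^sup>2))"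
      unfolding u by (simp add: algebra_simps power2_eq_square power3_eq_cube)
    also have "\<dots> = 0"
      using ode by simp
    finally show ?thesis .
  qed
  then have "{0<..} \<subseteq> {y. poly (travelling_wave_poly (\<tau> * \<mu>\<^sup>2 - \<kappa>) \<mu> \<gamma> z0 \<alpha> P Q) y = 0}"
    by auto
  then show ?thesis
    using poly_roots_finite finite_subset infinite_Ioi[of "0::real"] by blast
qed

lemma poly_quotient_tendsto_0_imp_degree_less:
  fixes P Q :: "real poly"
  assumes lim: "((\<lambda>y. poly P y / poly Q y) \<longlongrightarrow> 0) at_top" and "P \<noteq> 0" "Q \<noteq> 0"
  shows "degree P < degree Q"
proof (rule ccontr)
  assume "\<not> degree P < degree Q"
  define k where "k = degree P - degree Q"
  have lead: "((\<lambda>y. poly R y / y ^ degree R) \<longlongrightarrow> lead_coeff R) at_top" for R :: "real poly"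
    using tendsto_mono[OF at_top_le_at_infinity poly_divide_tendsto_aux] .
  have "((\<lambda>y. poly P y / poly Q y * (poly Q y / y ^ degree Q) * inverse y ^ k) \<longlongrightarrow> 0) at_top"
    using tendsto_mult[OF tendsto_mult[OF lim lead[of Q]]
        tendsto_power[OF tendsto_inverse_0_at_top[OF filterlim_ident], of k]] by simp
  moreover have "lead_coeff Q \<noteq> 0"
    using \<open>Q \<noteq> 0\<close> by simp
  then have "eventually (\<lambda>y. poly Q y / y ^ degree Q \<noteq> 0) at_top"
    by (rule tendsto_imp_eventually_ne[OF lead])
  then have "eventually (\<lambda>y. poly P y / poly Q y * (poly Q y / y ^ degree Q) * inverse y ^ k
      = poly P y / y ^ degree P) at_top"
    using eventually_gt_at_top[of 0]
  proof eventually_elim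
    case (elim y)
    have "y ^ degree P = y ^ degree Q * y ^ k"
      using \<open>\<not> degree P < degree Q\<close> by (simp add: k_def flip: power_add)
    with elim show ?case
      by (simp add: field_simps power_inverse)
  qed
  ultimately have "((\<lambda>y. poly P y / y ^ degree P) \<longlongrightarrow> 0) at_top"
    by (rule Lim_transform_eventually)
  with lead[of P] have "lead_coeff P = 0"
    using tendsto_unique trivial_limit_at_top_linorder by blast
  with \<open>P \<noteq> 0\<close> show False
    by simp
qed

lemma exp_quotient_decay_imp_degree_less:
  fixes P Q :: "real poly"
  assumes U: "U = (\<lambda>\<xi>. poly P (exp (\<alpha> * \<xi>)) / poly Q (exp (\<alpha> * \<xi>)))"
    and top: "(U \<longlongrightarrow> 0) at_top" and bot: "(U \<longlongrightarrow> 0) at_bot" and "U \<xi>0 \<noteq> 0"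
  shows "\<alpha> \<noteq> 0" and "degree P < degree Q"
proof -
  show "\<alpha> \<noteq> 0"
  proof
    assume "\<alpha> = 0"
    then have "U = (\<lambda>_. U \<xi>0)"
      by (simp add: U)
    with top \<open>U \<xi>0 \<noteq> 0\<close> show False
      by (metis tendsto_const_iff trivial_limit_at_top_linorder)
  qed
  have "(U \<longlongrightarrow> 0) (if \<alpha> > 0 then at_top else at_bot)"
    using top bot by simp
  moreover have "filterlim (\<lambda>y. inverse \<alpha> * ln y) (if \<alpha> > 0 then at_top else at_bot) at_top"
  proof (cases "\<alpha> > 0")
    case True
    then show ?thesis
      using filterlim_tendsto_pos_mult_at_top[OF tendsto_const _ ln_at_top] by simp
  next
    case False
    with \<open>\<alpha> \<noteq> 0\<close> show ?thesis
      using filterlim_tendsto_neg_mult_at_bot[OF tendsto_const _ ln_at_top] by simp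
  qed
  ultimately have "((\<lambda>y. U (inverse \<alpha> * ln y)) \<longlongrightarrow> 0) at_top"
    by (rule filterlim_compose)
  moreover have "eventually (\<lambda>y. U (inverse \<alpha> * ln y) = poly P y / poly Q y) at_top"
    using eventually_gt_at_top[of 0]
    by eventually_elim (use \<open>\<alpha> \<noteq> 0\<close> in \<open>simp add: U flip: mult.assoc\<close>)
  ultimately have "((\<lambda>y. poly P y / poly Q y) \<longlongrightarrow> 0) at_top"
    by (rule Lim_transform_eventually)
  moreover have "P \<noteq> 0" "Q \<noteq> 0"
    using \<open>U \<xi>0 \<noteq> 0\<close> by (auto simp: U)
  ultimately show "degree P < degree Q"
    by (rule poly_quotient_tendsto_0_imp_degree_less)
qed

lemma rational_exp_form_imp_coprime_quotient:
  assumes "rational_exp_form m U"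
  obtains P Q :: "real poly" and \<alpha> :: real
  where "coprime P Q" "poly P 0 = 0" "\<And>\<xi>. poly Q (exp (\<alpha> * \<xi>)) \<noteq> 0"
    "U = (\<lambda>\<xi>. poly P (exp (\<alpha> * \<xi>)) / poly Q (exp (\<alpha> * \<xi>)))"
proof -
  obtain a b :: "nat \<Rightarrow> real" and \<alpha> :: real where rep: "\<forall>\<xi>.
      1 + (\<Sum>r=1..m+1. b r * exp (real r * \<alpha> * \<xi>)) \<noteq> 0 \<and>
      U \<xi> = (\<Sum>k=1..m. a k * exp (real k * \<alpha> * \<xi>)) /
             (1 + (\<Sum>r=1..m+1. b r * exp (real r * \<alpha> * \<xi>)))"
    using assms unfolding rational_exp_form_def by blast
  define P0 :: "real poly" where "P0 = (\<Sum>k=1..m. monom (a k) k)"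
  define Q0 :: "real poly" where "Q0 = 1 + (\<Sum>r=1..m+1. monom (b r) r)"
  have "exp (real k * \<alpha> * \<xi>) = exp (\<alpha> * \<xi>) ^ k" for k \<xi>
    by (metis exp_of_nat_mult mult.assoc)
  then have "poly P0 (exp (\<alpha> * \<xi>)) = (\<Sum>k=1..m. a k * exp (real k * \<alpha> * \<xi>))"
    and "poly Q0 (exp (\<alpha> * \<xi>)) = 1 + (\<Sum>r=1..m+1. b r * exp (real r * \<alpha> * \<xi>))" for \<xi>
    by (simp_all add: P0_def Q0_def poly_sum poly_monom)
  with rep have Q0: "poly Q0 (exp (\<alpha> * \<xi>)) \<noteq> 0"
    and U: "U \<xi> = poly P0 (exp (\<alpha> * \<xi>)) / poly Q0 (exp (\<alpha> * \<xi>))" for \<xi>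
    by auto
  have "poly P0 0 = 0" "poly Q0 0 = 1"
    by (simp_all add: P0_def Q0_def poly_sum poly_monom)
  define G where "G = gcd P0 Q0"
  define P Q where "P = P0 div G" and "Q = Q0 div G"
  have "Q0 \<noteq> 0"
    using \<open>poly Q0 0 = 1\<close> by auto
  then have "coprime P Q"
    unfolding P_def Q_def G_def by (intro div_gcd_coprime) auto
  moreover have PG: "P0 = P * G" and QG: "Q0 = Q * G"
    by (simp_all add: P_def Q_def G_def)
  moreover have "poly P 0 = 0"
    using \<open>poly P0 0 = 0\<close> \<open>poly Q0 0 = 1\<close> by (auto simp: PG QG)
  moreover have "poly Q (exp (\<alpha> * \<xi>)) \<noteq> 0" "poly G (exp (\<alpha> * \<xi>)) \<noteq> 0" for \<xi>
    using Q0[of \<xi>] by (simp_all add: QG)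
  ultimately show ?thesis
    using U by (intro that[of P Q \<alpha>]) (simp_all add: fun_eq_iff)
qed

theorem lemma1:
  fixes \<tau> \<kappa> \<gamma> z0 \<mu> :: real and U :: "real \<Rightarrow> real" and m :: nat
  assumes "\<tau> * \<mu>\<^sup>2 - \<kappa> > 0" and "\<gamma> > 0" and "z0 \<noteq> 0"
    and "solitary_wave \<tau> \<kappa> \<gamma> z0 \<mu> U"
  shows "\<not> rational_exp_form m U"
proof
  assume "rational_exp_form m U"
  then obtain P Q :: "real poly" and \<alpha> where "coprime P Q" "poly P 0 = 0"
      and Q: "\<And>\<xi>. poly Q (exp (\<alpha> * \<xi>)) \<noteq> 0"
      and U: "U = (\<lambda>\<xi>. poly P (exp (\<alpha> * \<xi>)) / poly Q (exp (\<alpha> * \<xi>)))"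
    by (rule rational_exp_form_imp_coprime_quotient) blast
  obtain \<xi>0 where decay: "(U \<longlongrightarrow> 0) at_top" "(U \<longlongrightarrow> 0) at_bot" and "U \<xi>0 \<noteq> 0"
    and pde: "gen_burgers_pde \<tau> \<kappa> \<gamma> z0 (\<lambda>x t. U (x + \<mu> * t))"
    using assms(4) unfolding solitary_wave_def travelling_wave_solution_def by blast
  have "\<alpha> \<noteq> 0" "degree P < degree Q"
    using U decay \<open>U \<xi>0 \<noteq> 0\<close> by (rule exp_quotient_decay_imp_degree_less)+
  define A B :: "complex poly" where "A = map_poly of_real P" and "B = map_poly of_real Q"
  have ode_identity: "travelling_wave_poly (\<tau> * \<mu>\<^sup>2 - \<kappa>) \<mu> \<gamma> z0 \<alpha> A B = 0"
    using travelling_wave_poly_eq_0[OF \<open>\<alpha> \<noteq> 0\<close> Q pde U]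
    by (simp add: A_def B_def flip: map_poly_of_real_travelling_wave_poly)
  have "poly A z \<noteq> 0" if "poly B z = 0" for z
    using coprime_imp_no_common_root_of_real \<open>coprime P Q\<close> that by (simp add: A_def B_def)
  moreover have "poly A 0 = 0"
    using \<open>poly P 0 = 0\<close> by (simp add: A_def poly_0_coeff_0 coeff_map_poly)
  moreover have "degree A < degree B"
    using \<open>degree P < degree Q\<close> by (simp add: A_def B_def degree_map_poly)
  moreover have "poly A z * (of_real \<gamma> * (poly A z)\<^sup>2 - of_real \<alpha> * z * poly A z * poly (pderiv B) z
      + of_real (2 * (\<tau> * \<mu>\<^sup>2 - \<kappa>) * \<alpha>\<^sup>2) * z\<^sup>2 * (poly (pderiv B) z)\<^sup>2) = 0"
    if "poly B z = 0" for z
    using poly_travelling_wave_poly_root[OF that, of "\<tau> * \<mu>\<^sup>2 - \<kappa>" \<mu> \<gamma> z0 \<alpha> A] ode_identity by simp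
  ultimately show False
    using pole_balance_impossible \<open>\<alpha> \<noteq> 0\<close> assms(1,2) by blast
qed

end
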